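(* Let $m\ge n$, $1\le r\le n$, $\delta=r/n$, $\mu\in[0,1)$, $\tau\in\mathbb{Z}_{\ge1}$, $\eta>0$, and suppose Assumption (A3) holds. Then the error terms $\bm e_t^{(i)}$ of PowerSGD+ with MSGD satisfy, for every $t\ge0$, $$\mathbb{E}\Big\|\frac1N\sum_{i=1}^N\bm e_t^{(i)}\Big\|_F^2\le\frac{45\tau^2G^2}{\delta^2}.$$
   Context: Setting: $N$ nodes jointly minimize $f(\bm{X})=\frac1N\sum_{i=1}^N f_i(\bm{X})$ over $\bm{X}\in\mathbb{R}^{m\times n}$, where $f_i(\bm{X})=\mathbb{E}_{\xi^{(i)}\sim\mathcal{D}_i}[F(\bm{X};\xi^{(i)})]$; node $i$ queries stochastic gradients $\nabla F(\bm{X};\xi^{(i)})$, sampled independently across nodes and iterations. Assumption (A3): $\|\nabla f(\bm{X})\|_F^2\le\omega^2$ for all $\bm X$, and $\mathbb{E}\|\frac1N\sum_{i=1}^N\nabla F(\bm{X};\xi^{(i)})\|_F^2\le G^2:=\sigma^2+\omega^2$ for all $\bm X$, where $\sigma^2$ bounds the variance $\mathbb{E}\|\nabla F(\bm{X};\xi^{(i)})-\nabla f_i(\bm{X})\|_F^2$ for all $i$ and $\bm X$. $\mathrm{QR}(\bm A)$, for $\bm A\in\mathbb{R}^{m\times r}$, denotes the factor $\bm Q\in\mathbb{R}^{m\times r}$ with $\bm Q^\top\bm Q=I_r$ of an economic QR decomposition $\bm A=\bm Q\bm R$. PowerSGD+ with MSGD (step size $\eta$, momentum $\mu$, restart period $\tau$,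 rank $r$): initialize $\bm X_0$, $\bm Q_{-1}\in\mathbb{R}^{n\times r}$, $\bm m_{-1}=0$, $\bm e_0^{(i)}=0$. For $t=0,1,\dots$: each node computes $\bm g_t^{(i)}=\nabla F(\bm X_t;\xi_t^{(i)})$ and $\bm\Delta_t^{(i)}=\bm g_t^{(i)}+\bm e_t^{(i)}$; let $\bm\Delta_t=\frac1N\sum_i\bm\Delta_t^{(i)}$. If $t\not\equiv0\pmod\tau$: $\tilde{\bm P}_t=\mathrm{QR}\big(\frac1N\sum_i\bm\Delta_t^{(i)}\bm Q_{t-1}\big)$; if $t\equiv0\pmod\tau$: $\tilde{\bm P}_t$ is the matrix of the top-$r$ left singular vectors of $\bm\Delta_t$. In both cases $\bm Q_t=\frac1N\sum_i(\bm\Delta_t^{(i)})^\top\tilde{\bm P}_t$, $\widehat{\bm\Delta}_t^{(i)}=\tilde{\bm P}_t\tilde{\bm P}_t^\top\bm\Delta_t^{(i)}$, $\widehat{\bm\Delta}_t=\tilde{\bm P}_t\bm Q_t^\top$, $\bm e_{t+1}^{(i)}=\bm\Delta_t^{(i)}-\widehat{\bm\Delta}_t^{(i)}$, $\bm m_t=\mu\bm m_{t-1}+\widehat{\bm\Delta}_t$, $\bm X_{t+1}=\bm X_t-\eta\bm m_t$. *)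

theory Defs
  imports "HOL-Probability.Probability"
begin

text \<open>Matrices in R^(m x n) are modelled as real^'n^'m (rows indexed by 'm);
  the norm on this type is the Frobenius norm and the inner product is the
  Frobenius inner product. The rank r is the cardinality of the (linearly
  ordered) finite type 'r; m x r matrices are ((real, 'r) vec, 'm) vec.\<close>

definition outer :: "real^'m \<Rightarrow> real^'n \<Rightarrow> real^'n^'m" where
  "outer u v = (\<chi> i j. u$i * v$j)"

definition thin_svd :: "real^'n^'m \<Rightarrow> (nat \<Rightarrow> real) \<Rightarrow> (nat \<Rightarrow> real^'m) \<Rightarrow> (nat \<Rightarrow> real^'n) \<Rightarrow> bool" where
  "thin_svd A s u v \<longleftrightarrow>
     (\<forall>k<CARD('n). \<forall>l<CARD('n).
        u k \<bullet> u l = (if k = l then 1 else 0) \<and> v k \<bullet> v l = (if k = l then 1 else 0)) \<and>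
     (\<forall>k<CARD('n). 0 \<le> s k) \<and>
     (\<forall>k. Suc k < CARD('n) \<longrightarrow> s (Suc k) \<le> s k) \<and>
     A = (\<Sum>k<CARD('n). s k *\<^sub>R outer (u k) (v k))"

definition col_pos :: "'r::{finite,linorder} \<Rightarrow> nat" where
  "col_pos j = card {k. k < j}"

definition top_r_left_sv :: "real^'n^'m \<Rightarrow> ((real, 'r::{finite,linorder}) vec, 'm) vec \<Rightarrow> bool" where
  "top_r_left_sv A P \<longleftrightarrow>
     (\<exists>s u v. thin_svd A s u v \<and> (\<forall>j. column j P = u (col_pos j)))"

definition is_econ_QR :: "((real, 'r::{finite,linorder}) vec, 'm::finite) vec \<Rightarrow> ((real, 'r) vec, 'm) vec \<Rightarrow> bool" where
  "is_econ_QR A Q \<longleftrightarrow> transpose Q ** Q = mat 1 \<and>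
     (\<exists>R. (\<forall>i j. j < i \<longrightarrow> R$i$j = 0) \<and> A = Q ** R)"

text \<open>PowerSGD+ with MSGD. State after t iterations: (X_t, e_t, m_(t-1), Q_(t-1)).
  w (t,i) is the sample xi_t^(i); qrf / svdf are the (deterministic) QR and
  top-r SVD routines.\<close>
primrec psgd ::
  "nat \<Rightarrow> (real^'n^'m \<Rightarrow> 'b \<Rightarrow> real^'n^'m) \<Rightarrow> (((real, 'r::{finite,linorder}) vec, 'm::finite) vec \<Rightarrow> ((real, 'r) vec, 'm) vec) \<Rightarrow>
   (real^'n^'m \<Rightarrow> ((real, 'r) vec, 'm) vec) \<Rightarrow> nat \<Rightarrow> real \<Rightarrow> real \<Rightarrow> real^'n^'m \<Rightarrow> ((real, 'r) vec, 'n) vec \<Rightarrow>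
   (nat \<times> nat \<Rightarrow> 'b) \<Rightarrow> nat \<Rightarrow>
   (real^'n^'m) \<times> (nat \<Rightarrow> real^'n^'m) \<times> (real^'n^'m) \<times> ((real, 'r) vec, 'n) vec" where
  "psgd N gF qrf svdf \<tau> \<eta> \<mu> X0 Q0 w 0 = (X0, (\<lambda>i. 0), 0, Q0)"
| "psgd N gF qrf svdf \<tau> \<eta> \<mu> X0 Q0 w (Suc t) =
    (case psgd N gF qrf svdf \<tau> \<eta> \<mu> X0 Q0 w t of (X, e, mm, Q) \<Rightarrow>
      let Di = (\<lambda>i. gF X (w (t, i)) + e i);
          Dl = (1 / real N) *\<^sub>R (\<Sum>i<N. Di i);
          P = (if t mod \<tau> = 0 then svdf Dl
               else qrf ((1 / real N) *\<^sub>R (\<Sum>i<N. Di i ** Q)));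
          Qn = (1 / real N) *\<^sub>R (\<Sum>i<N. transpose (Di i) ** P);
          e' = (\<lambda>i. Di i - P ** transpose P ** Di i);
          Dhat = P ** transpose Qn;
          m' = \<mu> *\<^sub>R mm + Dhat;
          X' = X - \<eta> *\<^sub>R m'
      in (X', e', m', Qn))"

definition err where
  "err N gF qrf svdf \<tau> \<eta> \<mu> X0 Q0 w t i = fst (snd (psgd N gF qrf svdf \<tau> \<eta> \<mu> X0 Q0 w t)) i"

end

theory Submission
  imports Defs
begin

(* Averaging the error-feedback recursion over the nodes gives
   ebar_(t+1) = (I - P_t P_t^T)(gbar_t + ebar_t), where gbar_t is the averaged stochastic
   gradient. Every P_t has orthonormal columns, so the projection residual never increases the
   Frobenius norm, and at a restart step P_t spans the top-r left singular vectors of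
   gbar_t + ebar_t, so the residual keeps at most the fraction 1 - delta of the squared norm.
   Since X_t depends only on earlier samples, E |gbar_t|^2 <= G^2 by (A3), and Minkowski's
   inequality in L^2 bounds (E |ebar_(t+1)|^2)^(1/2) by c_t (beta_t + G), with
   c_t = sqrt(1 - delta) at restarts and c_t = 1 otherwise. Within a period the bound grows by at
   most tau G before it is contracted, so beta_t <= tau G / (1 - sqrt(1 - delta)) <= 2 tau G / delta;
   this is the claim with 4 in place of 45. *)

section \<open>Orthogonal projections and the truncated SVD\<close>

lemma inner_matrix_mult_left:
  "((X::real^'k^'m) ** (A::real^'n^'k)) \<bullet> B = A \<bullet> (transpose X ** B)"
proof -
  have "(X ** A) \<bullet> B = (\<Sum>i\<in>UNIV. \<Sum>j\<in>UNIV. \<Sum>k\<in>UNIV. X$i$k * A$k$j * B$i$j)"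
    by (simp add: inner_vec_def matrix_matrix_mult_def sum_distrib_right)
  also have "\<dots> = (\<Sum>k\<in>UNIV. \<Sum>j\<in>UNIV. \<Sum>i\<in>UNIV. X$i$k * A$k$j * B$i$j)"
    by (subst sum.swap, subst (2) sum.swap, subst sum.swap) simp
  also have "\<dots> = A \<bullet> (transpose X ** B)"
    by (simp add: inner_vec_def matrix_matrix_mult_def transpose_def sum_distrib_left mult_ac)
  finally show ?thesis .
qed

lemma matrix_mult_sum_right: "(A::'a::semiring_1^'k^'m) ** sum f S = (\<Sum>i\<in>S. A ** (f i :: 'a^'n^'k))"
  by (induction S rule: infinite_finite_induct) (auto simp: matrix_add_ldistrib)

lemma matrix_mult_scaleR_right: "(A::real^'k^'m) ** (c *\<^sub>R (B::real^'n^'k)) = c *\<^sub>R (A ** B)"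
  by (simp add: matrix_scalar_ac scalar_matrix_assoc)

context
  fixes P :: "real^'r^'m"
  assumes orth: "transpose P ** P = mat 1"
begin

lemma norm_orthonormal_proj_sq: "(norm (P ** transpose P ** A))\<^sup>2 = (norm (transpose P ** A))\<^sup>2"
  and inner_orthonormal_proj: "(P ** transpose P ** A) \<bullet> A = (norm (transpose P ** A))\<^sup>2"
proof -
  have PA: "P ** transpose P ** A = P ** (transpose P ** A)"
    by (simp add: matrix_mul_assoc)
  have "(P ** transpose P ** A) \<bullet> (P ** transpose P ** A) = (transpose P ** A) \<bullet> (transpose P ** A)"
    by (subst PA, subst inner_matrix_mult_left) (simp add: matrix_mul_assoc orth)
  then show "(norm (P ** transpose P ** A))\<^sup>2 = (norm (transpose P ** A))\<^sup>2"
    by (simp add: power2_norm_eq_inner)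
  show "(P ** transpose P ** A) \<bullet> A = (norm (transpose P ** A))\<^sup>2"
    by (subst PA, subst inner_matrix_mult_left) (simp add: power2_norm_eq_inner)
qed

lemma norm_orthonormal_residual_sq:
  "(norm (A - P ** transpose P ** A))\<^sup>2 = (norm A)\<^sup>2 - (norm (transpose P ** A))\<^sup>2"
  using norm_orthonormal_proj_sq[of A] inner_orthonormal_proj[of A]
  by (simp add: power2_norm_eq_inner inner_diff_left inner_diff_right inner_commute)

lemma norm_orthonormal_residual_le: "norm (A - P ** transpose P ** A) \<le> norm A"
  using norm_orthonormal_residual_sq[of A] by (simp add: power2_le_imp_le)

end

lemma col_pos_less: "col_pos (j::'r::{finite,linorder}) < CARD('r)"
  unfolding col_pos_def by (rule psubset_card_mono) auto

lemma inj_col_pos: "inj (col_pos :: 'r::{finite,linorder} \<Rightarrow> nat)"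
proof (rule injI)
  have mono: "col_pos j < col_pos j'" if "j < j'" for j j' :: 'r
    unfolding col_pos_def using that by (intro psubset_card_mono) auto
  show "j = j'" if "col_pos j = col_pos j'" for j j' :: 'r
    using mono[of j j'] mono[of j' j] that by (cases j j' rule: linorder_cases) auto
qed

lemma bij_betw_col_pos: "bij_betw (col_pos :: 'r::{finite,linorder} \<Rightarrow> nat) UNIV {..<CARD('r)}"
proof -
  have "col_pos ` (UNIV::'r set) = {..<CARD('r)}"
    using col_pos_less card_image[OF inj_col_pos]
    by (intro card_subset_eq) (auto simp: card_image[OF inj_col_pos])
  then show ?thesis using inj_col_pos by (simp add: bij_betw_def)
qed

lemma inner_outer: "outer (u::real^'m) (v::real^'n) \<bullet> outer u' v' = (u \<bullet> u') * (v \<bullet> v')"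
  by (simp add: inner_vec_def outer_def sum_product mult_ac)

lemma norm_thin_svd_sq:
  assumes svd: "thin_svd (A::real^'n^'m) s u v"
  shows "(norm A)\<^sup>2 = (\<Sum>k<CARD('n). (s k)\<^sup>2)"
proof -
  have orth: "\<And>k l. k < CARD('n) \<Longrightarrow> l < CARD('n) \<Longrightarrow>
      u k \<bullet> u l = (if k = l then 1 else 0) \<and> v k \<bullet> v l = (if k = l then 1 else 0)"
    and A: "A = (\<Sum>k<CARD('n). s k *\<^sub>R outer (u k) (v k))"
    using svd unfolding thin_svd_def by blast+
  have "(norm A)\<^sup>2 = (\<Sum>k<CARD('n). \<Sum>l<CARD('n). s k * s l * (u k \<bullet> u l) * (v k \<bullet> v l))"
    unfolding power2_norm_eq_inner A
    by (simp add: inner_sum_left inner_sum_right inner_outer sum_distrib_left mult_ac inner_commute)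
  also have "\<dots> = (\<Sum>k<CARD('n). \<Sum>l<CARD('n). if l = k then (s k)\<^sup>2 else 0)"
    using orth by (intro sum.cong refl) (auto simp: power2_eq_square)
  also have "\<dots> = (\<Sum>k<CARD('n). (s k)\<^sup>2)"
    by simp
  finally show ?thesis .
qed

lemma thin_svd_leading_columns:
  fixes A :: "real^'n^'m" and P :: "((real, 'r::{finite,linorder}) vec, 'm) vec"
  assumes svd: "thin_svd A s u v" and cols: "\<And>j. column j P = u (col_pos j)"
    and rn: "CARD('r) \<le> CARD('n)"
  shows "transpose P ** P = mat 1"
    and "(norm (transpose P ** A))\<^sup>2 = (\<Sum>k<CARD('r). (s k)\<^sup>2)"
proof -
  have orth: "\<And>k l. k < CARD('n) \<Longrightarrow> l < CARD('n) \<Longrightarrow>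
      u k \<bullet> u l = (if k = l then 1 else 0) \<and> v k \<bullet> v l = (if k = l then 1 else 0)"
    and A: "\<And>a b. A$a$b = (\<Sum>l<CARD('n). s l * u l $ a * v l $ b)"
    using svd unfolding thin_svd_def by (auto simp: outer_def mult.assoc)
  have P: "P$a$j = u (col_pos j) $ a" for a j
    using cols[of j] by (metis column_def vec_lambda_beta)
  have pos: "col_pos j < CARD('n)" for j :: 'r
    using col_pos_less rn by (rule less_le_trans)
  have "(transpose P ** P)$j$j' = u (col_pos j) \<bullet> u (col_pos j')" for j j'
    by (simp add: matrix_matrix_mult_def transpose_def P inner_vec_def)
  then show "transpose P ** P = mat 1"
    using orth pos inj_col_pos by (auto simp: vec_eq_iff mat_def dest: injD)
  have PA: "(transpose P ** A)$j$b = s (col_pos j) * v (col_pos j) $ b" for j b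
  proof -
    have "(transpose P ** A)$j$b = (\<Sum>l<CARD('n). s l * (u (col_pos j) \<bullet> u l) * v l $ b)"
      by (simp add: matrix_matrix_mult_def transpose_def P A inner_vec_def sum_distrib_left
          sum_distrib_right mult_ac sum.swap[of _ UNIV])
    also have "\<dots> = (\<Sum>l<CARD('n). if l = col_pos j then s (col_pos j) * v (col_pos j) $ b else 0)"
      using orth pos by (intro sum.cong refl) auto
    also have "\<dots> = s (col_pos j) * v (col_pos j) $ b"
      using pos by simp
    finally show ?thesis .
  qed
  have "(norm (transpose P ** A))\<^sup>2 = (\<Sum>j::'r\<in>UNIV. \<Sum>b\<in>UNIV. (s (col_pos j) * v (col_pos j) $ b)\<^sup>2)"
    unfolding power2_norm_eq_inner inner_vec_def PA by (simp add: power2_eq_square)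
  also have "\<dots> = (\<Sum>j::'r\<in>UNIV. (s (col_pos j))\<^sup>2 * (v (col_pos j) \<bullet> v (col_pos j)))"
    by (simp add: inner_vec_def power_mult_distrib sum_distrib_left power2_eq_square mult_ac)
  also have "\<dots> = (\<Sum>j::'r\<in>UNIV. (s (col_pos j))\<^sup>2)"
    using orth pos by simp
  also have "\<dots> = (\<Sum>k<CARD('r). (s k)\<^sup>2)"
    using sum.reindex_bij_betw[OF bij_betw_col_pos, of "\<lambda>k. (s k)\<^sup>2"] by simp
  finally show "(norm (transpose P ** A))\<^sup>2 = (\<Sum>k<CARD('r). (s k)\<^sup>2)" .
qed

lemma sum_head_mean_ge:
  fixes q :: "nat \<Rightarrow> real"
  assumes antimono: "\<And>k. Suc k < n \<Longrightarrow> q (Suc k) \<le> q k" and "r \<le> n"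
  shows "real r * (\<Sum>k<n. q k) \<le> real n * (\<Sum>k<r. q k)"
proof -
  have le: "q k \<le> q j" if "j < r" "r \<le> k" "k < n" for j k
    by (rule lift_Suc_antimono_le_ivl[of "{k. Suc k < n}" q]) (use that antimono in auto)
  have "real r * (\<Sum>k\<in>{r..<n}. q k) = (\<Sum>j<r. \<Sum>k\<in>{r..<n}. q k)"
    by simp
  also have "\<dots> \<le> (\<Sum>j<r. \<Sum>k\<in>{r..<n}. q j)"
    using le by (intro sum_mono) auto
  also have "\<dots> = real (n - r) * (\<Sum>j<r. q j)"
    by (simp add: sum_distrib_left)
  finally have "real r * (\<Sum>k\<in>{r..<n}. q k) \<le> real (n - r) * (\<Sum>j<r. q j)" .
  moreover have "(\<Sum>k<n. q k) = (\<Sum>k<r. q k) + (\<Sum>k\<in>{r..<n}. q k)"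
    using \<open>r \<le> n\<close> by (metis lessThan_atLeast0 sum.atLeastLessThan_concat zero_le)
  ultimately show ?thesis
    using \<open>r \<le> n\<close> by (simp add: algebra_simps of_nat_diff)
qed

lemma top_r_left_sv_orthonormal:
  fixes A :: "real^'n^'m" and P :: "((real, 'r::{finite,linorder}) vec, 'm) vec"
  assumes "top_r_left_sv A P" and "CARD('r) \<le> CARD('n)"
  shows "transpose P ** P = mat 1"
  using assms thin_svd_leading_columns(1) unfolding top_r_left_sv_def by blast

lemma top_r_left_sv_residual:
  fixes A :: "real^'n^'m" and P :: "((real, 'r::{finite,linorder}) vec, 'm) vec"
  assumes top: "top_r_left_sv A P" and rn: "CARD('r) \<le> CARD('n)"
  shows "(norm (A - P ** transpose P ** A))\<^sup>2 \<le> (1 - real CARD('r) / real CARD('n)) * (norm A)\<^sup>2"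
proof -
  obtain s u v where svd: "thin_svd A s u v" and cols: "\<And>j. column j P = u (col_pos j)"
    using top unfolding top_r_left_sv_def by blast
  note leading = thin_svd_leading_columns[OF svd cols rn]
  have "(s (Suc k))\<^sup>2 \<le> (s k)\<^sup>2" if "Suc k < CARD('n)" for k
    using svd that unfolding thin_svd_def by (auto intro!: power_mono)
  then have "real CARD('r) * (\<Sum>k<CARD('n). (s k)\<^sup>2) \<le> real CARD('n) * (\<Sum>k<CARD('r). (s k)\<^sup>2)"
    using rn by (rule sum_head_mean_ge)
  then have "real CARD('r) * (norm A)\<^sup>2 / real CARD('n) \<le> (norm (transpose P ** A))\<^sup>2"
    by (simp add: norm_thin_svd_sq[OF svd] leading(2) pos_divide_le_eq mult.commute)
  then show ?thesis
    by (simp add: norm_orthonormal_residual_sq[OF leading(1)] algebra_simps)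
qed

section \<open>The restart recursion\<close>

primrec restart_bound :: "nat \<Rightarrow> real \<Rightarrow> real \<Rightarrow> nat \<Rightarrow> real" where
  "restart_bound \<tau> c g 0 = 0"
| "restart_bound \<tau> c g (Suc t) = (if t mod \<tau> = 0 then c else 1) * (restart_bound \<tau> c g t + g)"

lemma restart_bound_le:
  assumes "1 \<le> \<tau>" and "0 \<le> c" and "c < 1" and "0 \<le> g"
  shows "restart_bound \<tau> c g t \<le> real \<tau> * g / (1 - c)"
proof -
  define K where "K = real \<tau> * g / (1 - c)"
  have K: "c * K + real \<tau> * g = K"
    using assms by (simp add: K_def field_simps)
  \<comment> \<open>(\<tau> - t mod \<tau>) mod \<tau> is the number of steps left until the next restart.\<close>
  have inv: "restart_bound \<tau> c g t + real ((\<tau> - t mod \<tau>) mod \<tau>) * g \<le> K" for t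
  proof (induction t)
    case 0
    show ?case
      using assms by (simp add: K_def)
  next
    case (Suc t)
    show ?case
    proof (cases "t mod \<tau> = 0")
      case True
      have "Suc ((\<tau> - Suc t mod \<tau>) mod \<tau>) \<le> \<tau>"
        using assms by (simp add: Suc_le_eq)
      then have "real ((\<tau> - Suc t mod \<tau>) mod \<tau>) \<le> real \<tau> - 1"
        by (simp flip: of_nat_le_iff)
      then have "restart_bound \<tau> c g (Suc t) + real ((\<tau> - Suc t mod \<tau>) mod \<tau>) * g
          \<le> c * (restart_bound \<tau> c g t + g) + (real \<tau> - 1) * g"
        using True assms by (simp add: mult_right_mono)
      also have "\<dots> \<le> c * K + real \<tau> * g"
      proof -
        have "c * restart_bound \<tau> c g t \<le> c * K"
          using Suc.IH True assms by (simp add: mult_left_mono)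
        moreover have "c * g \<le> g"
          using assms by (simp add: mult_left_le_one_le)
        ultimately show ?thesis
          by (simp add: algebra_simps)
      qed
      finally show ?thesis
        using K by simp
    next
      case False
      have steps: "(\<tau> - t mod \<tau>) mod \<tau> = Suc ((\<tau> - Suc t mod \<tau>) mod \<tau>)"
        using False assms mod_less_divisor[of \<tau> t] by (auto simp: mod_Suc Suc_diff_Suc)
      show ?thesis
        using Suc.IH False unfolding steps by (simp add: algebra_simps)
    qed
  qed
  have "0 \<le> real ((\<tau> - t mod \<tau>) mod \<tau>) * g"
    using assms by simp
  with inv[of t] show ?thesis
    unfolding K_def by linarith
qed

lemma restart_bound_nonneg: "0 \<le> c \<Longrightarrow> 0 \<le> g \<Longrightarrow> 0 \<le> restart_bound \<tau> c g t"
  by (induction t) auto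

lemma restart_bound_sqrt_le:
  assumes "1 \<le> \<tau>" and "0 < \<delta>" and "\<delta> \<le> 1" and "0 \<le> g"
  shows "restart_bound \<tau> (sqrt (1 - \<delta>)) g t \<le> 2 * real \<tau> * g / \<delta>"
proof -
  have "sqrt (1 - \<delta>) \<le> 1 - \<delta> / 2"
    using assms by (intro real_le_lsqrt) (auto simp: power2_eq_square algebra_simps)
  then have "real \<tau> * g / (1 - sqrt (1 - \<delta>)) \<le> real \<tau> * g / (\<delta> / 2)"
    using assms by (intro divide_left_mono) auto
  moreover have "restart_bound \<tau> (sqrt (1 - \<delta>)) g t \<le> real \<tau> * g / (1 - sqrt (1 - \<delta>))"
    using assms by (intro restart_bound_le) auto
  ultimately show ?thesis
    by (simp add: mult.commute mult.left_commute)
qed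

section \<open>Square integrals over products of probability spaces\<close>

lemma borel_measurable_matrix_mult:
  assumes "f \<in> borel_measurable M" and "g \<in> borel_measurable M"
  shows "(\<lambda>x. (f x :: real^'k^'m) ** (g x :: real^'n^'k)) \<in> borel_measurable M"
  using assms by (rule borel_measurable_continuous_Pair)
    (unfold matrix_matrix_mult_def, intro continuous_intros continuous_on_vec_lambda)

lemma borel_measurable_transpose:
  assumes "f \<in> borel_measurable M"
  shows "(\<lambda>x. transpose (f x :: real^'n^'m)) \<in> borel_measurable M"
proof -
  have "continuous_on UNIV (transpose :: real^'n^'m \<Rightarrow> real^'m^'n)"
    unfolding transpose_def by (intro continuous_intros continuous_on_vec_lambda)
  then show ?thesis
    using assms by (metis borel_measurable_continuous_onI measurable_compose)
qed

lemma distr_merge_PiM_prob: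
  fixes M :: "'i \<Rightarrow> 'a measure"
  assumes M: "\<And>i. i \<in> I \<union> J \<Longrightarrow> prob_space (M i)" and IJ: "I \<inter> J = {}"
  shows "distr (PiM I M \<Otimes>\<^sub>M PiM J M) (PiM (I \<union> J) M) (merge I J) = PiM (I \<union> J) M"
proof (rule measure_eqI_PiM_infinite[symmetric, OF refl])
  interpret PJ: prob_space "PiM J M" using M by (intro prob_space_PiM) auto
  interpret PU: prob_space "PiM (I \<union> J) M" using M by (intro prob_space_PiM) auto
  show "finite_measure (PiM (I \<union> J) M)" by unfold_locales
  fix K A assume K: "finite K" "K \<subseteq> I \<union> J" and A: "\<And>i. i \<in> K \<Longrightarrow> A i \<in> sets (M i)"
  let ?X = "prod_emb (I \<union> J) M K (Pi\<^sub>E K A)"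
  let ?XI = "prod_emb I M (K \<inter> I) (Pi\<^sub>E (K \<inter> I) A)"
  let ?XJ = "prod_emb J M (K \<inter> J) (Pi\<^sub>E (K \<inter> J) A)"
  have "PiM (I \<union> J) M ?X = (\<Prod>i\<in>K. M i (A i))"
    using M K A by (intro emeasure_PiM_emb) auto
  also have "\<dots> = (\<Prod>i\<in>K \<inter> I. M i (A i)) * (\<Prod>i\<in>K \<inter> J. M i (A i))"
  proof -
    have "K = (K \<inter> I) \<union> (K \<inter> J)" using K by auto
    then show ?thesis
      using K IJ by (metis prod.union_disjoint finite_Int Int_assoc Int_commute Int_empty_right
          Int_left_commute)
  qed
  also have "(\<Prod>i\<in>K \<inter> I. M i (A i)) = PiM I M ?XI"
    using M K A by (intro emeasure_PiM_emb[symmetric]) auto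
  also have "(\<Prod>i\<in>K \<inter> J. M i (A i)) = PiM J M ?XJ"
    using M K A by (intro emeasure_PiM_emb[symmetric]) auto
  also have "PiM I M ?XI * PiM J M ?XJ = (PiM I M \<Otimes>\<^sub>M PiM J M) (?XI \<times> ?XJ)"
    using K A by (intro PJ.emeasure_pair_measure_Times[symmetric] sets_PiM_I) auto
  also have "?XI \<times> ?XJ = merge I J -` ?X \<inter> space (PiM I M \<Otimes>\<^sub>M PiM J M)"
    using IJ K unfolding set_eq_iff
    by (auto simp: prod_emb_def space_pair_measure space_PiM PiE_iff merge_def extensional_def
        split: if_splits)
  finally show "PiM (I \<union> J) M ?X = distr (PiM I M \<Otimes>\<^sub>M PiM J M) (PiM (I \<union> J) M) (merge I J) ?X"
    using K A by (subst emeasure_distr) (auto intro!: sets_PiM_I)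
qed simp

lemma borel_measurable_ennreal_norm_sq:
  assumes [measurable]: "f \<in> borel_measurable M"
  shows "(\<lambda>x. ennreal ((norm (f x))\<^sup>2)) \<in> borel_measurable M"
  by measurable

lemma ennreal_le_of_power2_le:
  assumes "x ^ 2 \<le> ennreal (y ^ 2)" and "0 \<le> y"
  shows "x \<le> ennreal y"
proof (cases x rule: ennreal_cases)
  case (real c)
  then show ?thesis
    using assms by (auto simp: ennreal_power intro: ennreal_leI power2_le_imp_le)
qed (use assms in \<open>simp add: ennreal_power top_unique\<close>)

lemma nn_integral_sq_add_le:
  fixes f g :: "'a \<Rightarrow> real"
  assumes [measurable]: "f \<in> borel_measurable M" "g \<in> borel_measurable M"
    and nonneg: "\<And>x. 0 \<le> f x" "\<And>x. 0 \<le> g x" "0 \<le> a" "0 \<le> b"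
    and f2: "(\<integral>\<^sup>+x. ennreal ((f x)\<^sup>2) \<partial>M) \<le> ennreal (a\<^sup>2)"
    and g2: "(\<integral>\<^sup>+x. ennreal ((g x)\<^sup>2) \<partial>M) \<le> ennreal (b\<^sup>2)"
  shows "(\<integral>\<^sup>+x. ennreal ((f x + g x)\<^sup>2) \<partial>M) \<le> ennreal ((a + b)\<^sup>2)"
proof -
  have f2': "(\<integral>\<^sup>+x. ennreal (f x) ^ 2 \<partial>M) \<le> ennreal (a\<^sup>2)"
    using f2 nonneg by (simp add: ennreal_power)
  have g2': "(\<integral>\<^sup>+x. ennreal (g x) ^ 2 \<partial>M) \<le> ennreal (b\<^sup>2)"
    using g2 nonneg by (simp add: ennreal_power)
  have "(\<integral>\<^sup>+x. ennreal (f x) * ennreal (g x) \<partial>M)\<^sup>2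
      \<le> (\<integral>\<^sup>+x. ennreal (f x) ^ 2 \<partial>M) * (\<integral>\<^sup>+x. ennreal (g x) ^ 2 \<partial>M)"
    by (rule Cauchy_Schwarz_nn_integral) auto
  also have "\<dots> \<le> ennreal (a\<^sup>2) * ennreal (b\<^sup>2)"
    using f2' g2' by (intro mult_mono) auto
  also have "\<dots> = ennreal ((a * b)\<^sup>2)"
    using nonneg by (simp add: ennreal_mult' power_mult_distrib)
  finally have fg: "(\<integral>\<^sup>+x. ennreal (f x) * ennreal (g x) \<partial>M) \<le> ennreal (a * b)"
    by (rule ennreal_le_of_power2_le) (use nonneg in simp)
  have "ennreal ((f x + g x)\<^sup>2) = (ennreal (f x) + ennreal (g x))\<^sup>2" for x
    using nonneg(1,2)[of x] by (simp add: ennreal_power[symmetric])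
  then have "(\<integral>\<^sup>+x. ennreal ((f x + g x)\<^sup>2) \<partial>M)
      = (\<integral>\<^sup>+x. ennreal (f x) ^ 2 + ennreal (g x) ^ 2 + 2 * (ennreal (f x) * ennreal (g x)) \<partial>M)"
    by (simp add: power2_sum mult.assoc)
  also have "\<dots> = (\<integral>\<^sup>+x. ennreal (f x) ^ 2 \<partial>M) + (\<integral>\<^sup>+x. ennreal (g x) ^ 2 \<partial>M)
      + 2 * (\<integral>\<^sup>+x. ennreal (f x) * ennreal (g x) \<partial>M)"
    by (simp add: nn_integral_add nn_integral_cmult)
  also have "\<dots> \<le> ennreal (a\<^sup>2) + ennreal (b\<^sup>2) + 2 * ennreal (a * b)"
    using f2' fg g2' by (intro add_mono mult_left_mono) auto
  also have "\<dots> = ennreal ((a + b)\<^sup>2)"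
    using nonneg(3,4) by (simp add: ennreal_power[symmetric] ennreal_mult power2_sum mult.assoc)
  finally show ?thesis .
qed

lemma nn_integral_PiM_split_le:
  fixes M :: "'i \<Rightarrow> 'a measure" and X :: "('i \<Rightarrow> 'a) \<Rightarrow> 'x"
  assumes M: "\<And>i. i \<in> I \<union> J \<Longrightarrow> prob_space (M i)" and IJ: "I \<inter> J = {}"
    and X: "\<And>w w'. (\<And>j. j \<in> J \<Longrightarrow> w j = w' j) \<Longrightarrow> X w = X w'"
    and h: "\<And>x. h x \<in> borel_measurable (PiM I M)"
    and f: "(\<lambda>w. h (X w) (restrict w I)) \<in> borel_measurable (PiM (I \<union> J) M)"
    and bound: "\<And>x. (\<integral>\<^sup>+\<omega>. h x \<omega> \<partial>PiM I M) \<le> B"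
  shows "(\<integral>\<^sup>+w. h (X w) (restrict w I) \<partial>PiM (I \<union> J) M) \<le> B"
proof -
  interpret PI: prob_space "PiM I M" using M by (intro prob_space_PiM) auto
  interpret PJ: prob_space "PiM J M" using M by (intro prob_space_PiM) auto
  interpret PIJ: pair_sigma_finite "PiM I M" "PiM J M" ..
  have merge: "h (X (merge I J (x, y))) (restrict (merge I J (x, y)) I) = h (X y) x"
    if "x \<in> space (PiM I M)" for x y
  proof -
    have "X (merge I J (x, y)) = X y"
      using IJ by (intro X) (auto simp: merge_def)
    moreover have "restrict (merge I J (x, y)) I = x"
      using that by (auto simp: space_PiM restrict_def merge_def fun_eq_iff PiE_def extensional_def)
    ultimately show ?thesis by simp
  qed
  have "(\<integral>\<^sup>+w. h (X w) (restrict w I) \<partial>PiM (I \<union> J) M)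
      = (\<integral>\<^sup>+w. h (X w) (restrict w I) \<partial>distr (PiM I M \<Otimes>\<^sub>M PiM J M) (PiM (I \<union> J) M) (merge I J))"
    using M IJ by (subst distr_merge_PiM_prob) auto
  also have "\<dots> = (\<integral>\<^sup>+z. h (X (merge I J z)) (restrict (merge I J z) I) \<partial>(PiM I M \<Otimes>\<^sub>M PiM J M))"
    by (rule nn_integral_distr) (use f in simp_all)
  also have "\<dots> = (\<integral>\<^sup>+y. \<integral>\<^sup>+x. h (X (merge I J (x, y))) (restrict (merge I J (x, y)) I) \<partial>PiM I M \<partial>PiM J M)"
    by (rule PIJ.nn_integral_snd[symmetric]) (use measurable_comp[OF measurable_merge f] in \<open>simp add: comp_def\<close>)
  also have "\<dots> = (\<integral>\<^sup>+y. \<integral>\<^sup>+x. h (X y) x \<partial>PiM I M \<partial>PiM J M)"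
    using merge by (intro nn_integral_cong) simp
  also have "\<dots> \<le> (\<integral>\<^sup>+y. B \<partial>PiM J M)"
    using bound by (intro nn_integral_mono) simp
  also have "\<dots> = B"
    by (simp add: PJ.emeasure_space_1)
  finally show ?thesis .
qed

lemma measurable_row:
  "(\<lambda>\<omega>. \<lambda>i\<in>I. \<omega> (t, i)) \<in> measurable (PiM ({t} \<times> I) (\<lambda>(t, i). D i)) (PiM I D)"
proof (rule measurable_restrict)
  show "(\<lambda>\<omega>. \<omega> (t, i)) \<in> measurable (PiM ({t} \<times> I) (\<lambda>(t, i). D i)) (D i)" if "i \<in> I" for i
    using measurable_component_singleton[of "(t, i)" "{t} \<times> I" "\<lambda>(t, i). D i"] that by simp
qed

lemma nn_integral_PiM_row:
  fixes D :: "'i \<Rightarrow> 'a measure" and f :: "('i \<Rightarrow> 'a) \<Rightarrow> ennreal"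
  assumes D: "\<And>i. i \<in> I \<Longrightarrow> prob_space (D i)" and f: "f \<in> borel_measurable (PiM I D)"
  shows "(\<integral>\<^sup>+\<omega>. f (\<lambda>i\<in>I. \<omega> (t, i)) \<partial>PiM ({t} \<times> I) (\<lambda>(t, i). D i)) = (\<integral>\<^sup>+\<xi>. f \<xi> \<partial>PiM I D)"
proof -
  have "distr (PiM ({t} \<times> I) (\<lambda>(t, i). D i)) (PiM I D) (\<lambda>\<omega>. \<lambda>i\<in>I. \<omega> (t, i)) = PiM I D"
    using distr_PiM_reindex[of "{t} \<times> I" "\<lambda>(t, i). D i" "Pair t" I] D by (auto simp: inj_on_def)
  then show ?thesis
    using f measurable_row by (metis nn_integral_distr)
qed

section \<open>The PowerSGD+ iterates\<close>

locale powersgd =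
  fixes N :: nat
    and gF :: "real^'n^'m \<Rightarrow> 'b \<Rightarrow> real^'n^'m"
    and qrf :: "((real, 'r::{finite,linorder}) vec, 'm::finite) vec \<Rightarrow> ((real, 'r) vec, 'm) vec"
    and svdf :: "real^'n^'m \<Rightarrow> ((real, 'r) vec, 'm) vec"
    and \<tau> :: nat and \<eta> \<mu> :: real and X0 :: "real^'n^'m" and Q0 :: "((real, 'r) vec, 'n) vec"
    and D :: "nat \<Rightarrow> 'b measure"
  assumes prob_space_D: "\<And>i. i < N \<Longrightarrow> prob_space (D i)"
    and gF_measurable: "\<And>i. i < N \<Longrightarrow> (\<lambda>(X, \<xi>). gF X \<xi>) \<in> borel_measurable (borel \<Otimes>\<^sub>M D i)"
    and qrf_measurable: "qrf \<in> borel_measurable borel"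
    and svdf_measurable: "svdf \<in> borel_measurable borel"
    and qrf_QR: "\<And>A. is_econ_QR A (qrf A)"
    and svdf_top_r: "\<And>A. top_r_left_sv A (svdf A)"
    and r_le_n: "CARD('r) \<le> CARD('n)"
begin

text \<open>The state after t steps is (X_t, e_t, m_(t-1), Q_(t-1)), so \<open>iter_m w t\<close> and
  \<open>iter_Q w t\<close> are the paper's m_(t-1) and Q_(t-1); \<open>proj_basis w t\<close> is its P~_t.\<close>

definition "iter_X w t = fst (psgd N gF qrf svdf \<tau> \<eta> \<mu> X0 Q0 w t)"
definition "iter_m w t = fst (snd (snd (psgd N gF qrf svdf \<tau> \<eta> \<mu> X0 Q0 w t)))"
definition "iter_Q w t = snd (snd (snd (psgd N gF qrf svdf \<tau> \<eta> \<mu> X0 Q0 w t)))"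
abbreviation "iter_e \<equiv> err N gF qrf svdf \<tau> \<eta> \<mu> X0 Q0"

definition "Delta w t i = gF (iter_X w t) (w (t, i)) + iter_e w t i"
definition "mean_grad w t = (1 / real N) *\<^sub>R (\<Sum>i<N. gF (iter_X w t) (w (t, i)))"
definition "mean_err w t = (1 / real N) *\<^sub>R (\<Sum>i<N. iter_e w t i)"
definition "proj_basis w t = (if t mod \<tau> = 0 then svdf (mean_grad w t + mean_err w t)
    else qrf ((1 / real N) *\<^sub>R (\<Sum>i<N. Delta w t i ** iter_Q w t)))"

lemma iter_0: "iter_X w 0 = X0" "iter_m w 0 = 0" "iter_Q w 0 = Q0" "iter_e w 0 i = 0"
  by (simp_all add: iter_X_def iter_m_def iter_Q_def err_def)

lemma iter_Suc:
  "iter_Q w (Suc t) = (1 / real N) *\<^sub>R (\<Sum>i<N. transpose (Delta w t i) ** proj_basis w t)"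
  "iter_m w (Suc t) = \<mu> *\<^sub>R iter_m w t + proj_basis w t ** transpose (iter_Q w (Suc t))"
  "iter_X w (Suc t) = iter_X w t - \<eta> *\<^sub>R iter_m w (Suc t)"
  "iter_e w (Suc t) i = Delta w t i - proj_basis w t ** transpose (proj_basis w t) ** Delta w t i"
  by (simp_all add: iter_X_def iter_m_def iter_Q_def err_def Delta_def proj_basis_def mean_grad_def
      mean_err_def split_beta Let_def sum.distrib scaleR_add_right)

lemma iter_local:
  assumes "\<And>s i. s < t \<Longrightarrow> i < N \<Longrightarrow> w (s, i) = w' (s, i)"
  shows "iter_X w t = iter_X w' t \<and> iter_m w t = iter_m w' t \<and> iter_Q w t = iter_Q w' t
    \<and> (\<forall>i<N. iter_e w t i = iter_e w' t i)"
  using assms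
proof (induction t)
  case 0
  then show ?case by (simp add: iter_0)
next
  case (Suc t)
  then have IH: "iter_X w t = iter_X w' t" "iter_m w t = iter_m w' t" "iter_Q w t = iter_Q w' t"
      "\<And>i. i < N \<Longrightarrow> iter_e w t i = iter_e w' t i"
    by simp_all
  have Delta: "Delta w t i = Delta w' t i" if "i < N" for i
    using IH that Suc.prems[of t i] by (simp add: Delta_def)
  have "mean_grad w t = mean_grad w' t" "mean_err w t = mean_err w' t"
    using IH Suc.prems unfolding mean_grad_def mean_err_def
    by (auto intro!: arg_cong[where f = "scaleR _"] sum.cong)
  then have "proj_basis w t = proj_basis w' t"
    using Delta IH unfolding proj_basis_def by (auto intro!: arg_cong[where f = qrf] sum.cong)
  then show ?case
    using IH Delta by (auto simp: iter_Suc intro!: sum.cong)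
qed

abbreviation "samples \<equiv> PiM (UNIV \<times> {..<N}) (\<lambda>(t, i). D i)"

lemma measurable_gF:
  assumes "f \<in> borel_measurable M" and "g \<in> measurable M (D i)" and "i < N"
  shows "(\<lambda>x. gF (f x) (g x)) \<in> borel_measurable M"
  using measurable_comp[OF measurable_Pair[OF assms(1,2)] gF_measurable[OF assms(3)]]
  by (simp add: comp_def)

lemma measurable_sample: "i < N \<Longrightarrow> (\<lambda>w. w (t, i)) \<in> measurable samples (D i)"
  using measurable_component_singleton[of "(t, i)" "UNIV \<times> {..<N}" "\<lambda>(t, i). D i"] by simp

lemma iter_measurable:
  "(\<lambda>w. iter_X w t) \<in> borel_measurable samples \<and> (\<lambda>w. iter_m w t) \<in> borel_measurable samples
    \<and> (\<lambda>w. iter_Q w t) \<in> borel_measurable samples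
    \<and> (\<forall>i<N. (\<lambda>w. iter_e w t i) \<in> borel_measurable samples)"
proof (induction t)
  case 0
  then show ?case by (simp add: iter_0)
next
  case (Suc t)
  then have X: "(\<lambda>w. iter_X w t) \<in> borel_measurable samples"
    and m: "(\<lambda>w. iter_m w t) \<in> borel_measurable samples"
    and Q: "(\<lambda>w. iter_Q w t) \<in> borel_measurable samples"
    and e: "\<And>i. i < N \<Longrightarrow> (\<lambda>w. iter_e w t i) \<in> borel_measurable samples"
    by auto
  have g: "(\<lambda>w. gF (iter_X w t) (w (t, i))) \<in> borel_measurable samples" if "i < N" for i
    by (rule measurable_gF[OF X measurable_sample[OF that] that])
  have Delta: "(\<lambda>w. Delta w t i) \<in> borel_measurable samples" if "i < N" for i
    unfolding Delta_def using g[OF that] e[OF that] by (rule borel_measurable_add)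
  have "(\<lambda>w. mean_grad w t + mean_err w t) \<in> borel_measurable samples"
    unfolding mean_grad_def mean_err_def using g e
    by (intro borel_measurable_add borel_measurable_scaleR borel_measurable_const borel_measurable_sum) auto
  moreover have "(\<lambda>w. (1 / real N) *\<^sub>R (\<Sum>i<N. Delta w t i ** iter_Q w t)) \<in> borel_measurable samples"
    using Delta Q by (intro borel_measurable_scaleR borel_measurable_const borel_measurable_sum
        borel_measurable_matrix_mult) auto
  ultimately have P: "(\<lambda>w. proj_basis w t) \<in> borel_measurable samples"
    unfolding proj_basis_def
    by (cases "t mod \<tau> = 0") (auto intro: measurable_compose svdf_measurable qrf_measurable)
  have "(\<lambda>w. iter_Q w (Suc t)) \<in> borel_measurable samples"
    unfolding iter_Suc using Delta P
    by (intro borel_measurable_scaleR borel_measurable_const borel_measurable_sum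
        borel_measurable_matrix_mult borel_measurable_transpose) auto
  moreover from this have "(\<lambda>w. iter_m w (Suc t)) \<in> borel_measurable samples"
    unfolding iter_Suc(2) using m P
    by (intro borel_measurable_add borel_measurable_scaleR borel_measurable_const
        borel_measurable_matrix_mult borel_measurable_transpose) auto
  moreover from this have "(\<lambda>w. iter_X w (Suc t)) \<in> borel_measurable samples"
    unfolding iter_Suc(3) using X
    by (intro borel_measurable_diff borel_measurable_scaleR borel_measurable_const) auto
  moreover have "(\<lambda>w. iter_e w (Suc t) i) \<in> borel_measurable samples" if "i < N" for i
    unfolding iter_Suc(4) using Delta[OF that] P
    by (intro borel_measurable_diff borel_measurable_matrix_mult borel_measurable_transpose)
  ultimately show ?case
    by blast
qed

lemma mean_measurable[measurable]:
  "(\<lambda>w. mean_grad w t) \<in> borel_measurable samples" "(\<lambda>w. mean_err w t) \<in> borel_measurable samples"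
  using iter_measurable[of t] measurable_gF[OF _ measurable_sample]
  unfolding mean_grad_def mean_err_def
  by (auto intro!: borel_measurable_scaleR borel_measurable_const borel_measurable_sum)

lemma proj_basis_orthonormal: "transpose (proj_basis w t) ** proj_basis w t = mat 1"
  using qrf_QR top_r_left_sv_orthonormal[OF svdf_top_r r_le_n]
  unfolding proj_basis_def is_econ_QR_def by auto

lemma mean_err_Suc:
  "mean_err w (Suc t) = (mean_grad w t + mean_err w t)
     - proj_basis w t ** transpose (proj_basis w t) ** (mean_grad w t + mean_err w t)"
proof -
  have "mean_err w (Suc t) = (1 / real N) *\<^sub>R (\<Sum>i<N. Delta w t i)
      - proj_basis w t ** transpose (proj_basis w t) ** ((1 / real N) *\<^sub>R (\<Sum>i<N. Delta w t i))"
    by (simp add: mean_err_def iter_Suc sum_subtractf scaleR_diff_right matrix_mult_sum_right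
        matrix_mult_scaleR_right)
  moreover have "(1 / real N) *\<^sub>R (\<Sum>i<N. Delta w t i) = mean_grad w t + mean_err w t"
    by (simp add: Delta_def mean_grad_def mean_err_def sum.distrib scaleR_add_right)
  ultimately show ?thesis
    by simp
qed

lemma norm_mean_err_Suc_le:
  "norm (mean_err w (Suc t)) \<le> (if t mod \<tau> = 0 then sqrt (1 - real CARD('r) / real CARD('n)) else 1)
     * (norm (mean_err w t) + norm (mean_grad w t))"
proof -
  define A where "A = mean_grad w t + mean_err w t"
  define P where "P = proj_basis w t"
  have A: "norm A \<le> norm (mean_err w t) + norm (mean_grad w t)"
    unfolding A_def by (metis add.commute norm_triangle_ineq)
  have "norm (mean_err w (Suc t)) = norm (A - P ** transpose P ** A)"
    by (simp add: mean_err_Suc A_def P_def)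
  also have "\<dots> \<le> (if t mod \<tau> = 0 then sqrt (1 - real CARD('r) / real CARD('n)) else 1) * norm A"
  proof (cases "t mod \<tau> = 0")
    case True
    then have "(norm (A - P ** transpose P ** A))\<^sup>2 \<le> (1 - real CARD('r) / real CARD('n)) * (norm A)\<^sup>2"
      using top_r_left_sv_residual[OF svdf_top_r r_le_n] by (simp add: P_def proj_basis_def A_def)
    then have "norm (A - P ** transpose P ** A) \<le> sqrt ((1 - real CARD('r) / real CARD('n)) * (norm A)\<^sup>2)"
      by (rule real_le_rsqrt)
    then show ?thesis
      using True by (simp add: real_sqrt_mult)
  next
    case False
    then show ?thesis
      using norm_orthonormal_residual_le[OF proj_basis_orthonormal] by (simp add: P_def)
  qed
  also have "\<dots> \<le> (if t mod \<tau> = 0 then sqrt (1 - real CARD('r) / real CARD('n)) else 1)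
      * (norm (mean_err w t) + norm (mean_grad w t))"
    using A r_le_n by (intro mult_left_mono) auto
  finally show ?thesis .
qed

lemma mean_grad_moment_le:
  assumes moment: "\<And>X. (\<integral>\<^sup>+\<xi>. ennreal ((norm ((1 / real N) *\<^sub>R (\<Sum>i<N. gF X (\<xi> i))))\<^sup>2) \<partial>PiM {..<N} D) \<le> B"
  shows "(\<integral>\<^sup>+w. ennreal ((norm (mean_grad w t))\<^sup>2) \<partial>samples) \<le> B"
proof -
  define g where "g X \<xi> = ennreal ((norm ((1 / real N) *\<^sub>R (\<Sum>i<N. gF X (\<xi> i))))\<^sup>2)" for X \<xi>
  define h where "h X \<omega> = g X (\<lambda>i\<in>{..<N}. \<omega> (t, i))" for X \<omega>
  define I where "I = {t} \<times> {..<N}"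
  define J where "J = (UNIV \<times> {..<N}) - I"
  have IJ: "UNIV \<times> {..<N} = I \<union> J" "I \<inter> J = {}"
    by (auto simp: I_def J_def)
  have "(\<lambda>\<xi>. gF X (\<xi> i)) \<in> borel_measurable (PiM {..<N} D)" if "i < N" for X i
    using that by (intro measurable_gF) (auto intro: measurable_component_singleton)
  then have g: "g X \<in> borel_measurable (PiM {..<N} D)" for X
    unfolding g_def
    by (intro borel_measurable_ennreal_norm_sq borel_measurable_scaleR borel_measurable_const
        borel_measurable_sum) auto
  have mean: "h (iter_X w t) (restrict w I) = ennreal ((norm (mean_grad w t))\<^sup>2)" for w
    by (simp add: h_def g_def mean_grad_def I_def)
  have "(\<integral>\<^sup>+w. h (iter_X w t) (restrict w I) \<partial>PiM (I \<union> J) (\<lambda>(t, i). D i)) \<le> B"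
  proof (rule nn_integral_PiM_split_le[where X = "\<lambda>w. iter_X w t" and h = h])
    show "prob_space (case k of (t, i) \<Rightarrow> D i)" if "k \<in> I \<union> J" for k
      using that prob_space_D by (auto simp: I_def J_def)
    show "iter_X w t = iter_X w' t" if "\<And>j. j \<in> J \<Longrightarrow> w j = w' j" for w w'
      using iter_local[of t w w'] that by (auto simp: J_def I_def)
    show "h X \<in> borel_measurable (PiM I (\<lambda>(t, i). D i))" for X
      unfolding h_def I_def using measurable_row g by (rule measurable_compose)
    show "(\<lambda>w. h (iter_X w t) (restrict w I)) \<in> borel_measurable (PiM (I \<union> J) (\<lambda>(t, i). D i))"
      unfolding mean IJ(1)[symmetric] by (rule borel_measurable_ennreal_norm_sq[OF mean_measurable(1)])
    show "(\<integral>\<^sup>+\<omega>. h X \<omega> \<partial>PiM I (\<lambda>(t, i). D i)) \<le> B" for X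
    proof -
      have "(\<integral>\<^sup>+\<omega>. h X \<omega> \<partial>PiM I (\<lambda>(t, i). D i)) = (\<integral>\<^sup>+\<xi>. g X \<xi> \<partial>PiM {..<N} D)"
        unfolding h_def I_def by (rule nn_integral_PiM_row) (use prob_space_D g in auto)
      also have "\<dots> \<le> B"
        unfolding g_def by (rule moment)
      finally show ?thesis .
    qed
  qed (rule IJ(2))
  then show ?thesis
    by (simp add: mean IJ(1)[symmetric])
qed

lemma mean_err_moment_le:
  assumes "0 \<le> G"
    and moment: "\<And>X. (\<integral>\<^sup>+\<xi>. ennreal ((norm ((1 / real N) *\<^sub>R (\<Sum>i<N. gF X (\<xi> i))))\<^sup>2) \<partial>PiM {..<N} D)
      \<le> ennreal (G\<^sup>2)"
  shows "(\<integral>\<^sup>+w. ennreal ((norm (mean_err w t))\<^sup>2) \<partial>samples)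
    \<le> ennreal ((restart_bound \<tau> (sqrt (1 - real CARD('r) / real CARD('n))) G t)\<^sup>2)"
proof (induction t)
  case 0
  then show ?case by (simp add: mean_err_def iter_0)
next
  case (Suc t)
  define c where "c = (if t mod \<tau> = 0 then sqrt (1 - real CARD('r) / real CARD('n)) else 1)"
  define \<beta> where "\<beta> = restart_bound \<tau> (sqrt (1 - real CARD('r) / real CARD('n))) G t"
  have c: "0 \<le> c" and \<beta>: "0 \<le> \<beta>"
    using r_le_n \<open>0 \<le> G\<close> by (auto simp: c_def \<beta>_def intro!: restart_bound_nonneg)
  have "(\<integral>\<^sup>+w. ennreal ((norm (mean_err w (Suc t)))\<^sup>2) \<partial>samples)
      \<le> (\<integral>\<^sup>+w. ennreal (c\<^sup>2) * ennreal ((norm (mean_err w t) + norm (mean_grad w t))\<^sup>2) \<partial>samples)"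
    using norm_mean_err_Suc_le c
    by (intro nn_integral_mono) (auto simp: c_def ennreal_mult'[symmetric] power_mult_distrib[symmetric]
        intro!: power_mono)
  also have "\<dots> = ennreal (c\<^sup>2) * (\<integral>\<^sup>+w. ennreal ((norm (mean_err w t) + norm (mean_grad w t))\<^sup>2) \<partial>samples)"
    by (intro nn_integral_cmult) measurable
  also have "\<dots> \<le> ennreal (c\<^sup>2) * ennreal ((\<beta> + G)\<^sup>2)"
    using mean_measurable Suc.IH mean_grad_moment_le[OF moment] \<beta> \<open>0 \<le> G\<close>
    by (intro mult_left_mono nn_integral_sq_add_le) (auto simp: \<beta>_def)
  also have "\<dots> = ennreal ((restart_bound \<tau> (sqrt (1 - real CARD('r) / real CARD('n))) G (Suc t))\<^sup>2)"
    using c by (simp add: c_def \<beta>_def ennreal_mult'[symmetric] power_mult_distrib)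
  finally show ?case .
qed

end

theorem lemma3:
  fixes N :: nat
    and D :: "nat \<Rightarrow> 'b measure"
    and F :: "real^'n^'m \<Rightarrow> 'b \<Rightarrow> real"
    and gF :: "real^'n^'m \<Rightarrow> 'b \<Rightarrow> real^'n^'m"
    and gfi :: "nat \<Rightarrow> real^'n^'m \<Rightarrow> real^'n^'m"
    and gf :: "real^'n^'m \<Rightarrow> real^'n^'m"
    and qrf :: "((real, 'r::{finite,linorder}) vec, 'm::finite) vec \<Rightarrow> ((real, 'r) vec, 'm) vec"
    and svdf :: "real^'n^'m \<Rightarrow> ((real, 'r) vec, 'm) vec"
    and \<tau> :: nat and \<eta> \<mu> \<sigma> \<omega> :: real
    and X0 :: "real^'n^'m" and Q0 :: "((real, 'r) vec, 'n) vec"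
  assumes "CARD('n) \<le> CARD('m)" and "CARD('r) \<le> CARD('n)"
    and "1 \<le> N" and "0 \<le> \<mu>" and "\<mu> < 1" and "1 \<le> \<tau>" and "0 < \<eta>"
    and "\<forall>i<N. prob_space (D i)"
    and "\<forall>i<N. \<forall>\<xi>\<in>space (D i). \<forall>X. ((\<lambda>Y. F Y \<xi>) has_derivative (\<lambda>H. gF X \<xi> \<bullet> H)) (at X)"
    and "\<forall>i<N. \<forall>X. ((\<lambda>Y. \<integral>\<xi>. F Y \<xi> \<partial>D i) has_derivative (\<lambda>H. gfi i X \<bullet> H)) (at X)"
    and "\<forall>X. ((\<lambda>Y. (1 / real N) * (\<Sum>i<N. \<integral>\<xi>. F Y \<xi> \<partial>D i)) has_derivative (\<lambda>H. gf X \<bullet> H)) (at X)"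
    and "\<forall>X. (norm (gf X))^2 \<le> \<omega>^2"
    and "\<forall>i<N. \<forall>X. (\<integral>\<^sup>+\<xi>. ennreal ((norm (gF X \<xi> - gfi i X))^2) \<partial>D i) \<le> ennreal (\<sigma>^2)"
    and "\<forall>X. (\<integral>\<^sup>+\<xi>. ennreal ((norm ((1 / real N) *\<^sub>R (\<Sum>i<N. gF X (\<xi> i))))^2) \<partial>(PiM {..<N} D))
            \<le> ennreal (\<sigma>^2 + \<omega>^2)"
    and "\<forall>i<N. (\<lambda>(X, \<xi>). gF X \<xi>) \<in> borel_measurable (borel \<Otimes>\<^sub>M D i)"
    and "qrf \<in> borel_measurable borel" and "svdf \<in> borel_measurable borel"
    and "\<forall>A. is_econ_QR A (qrf A)" and "\<forall>A. top_r_left_sv A (svdf A)"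
  shows "\<forall>t. (\<integral>\<^sup>+w. ennreal ((norm ((1 / real N) *\<^sub>R
                 (\<Sum>i<N. err N gF qrf svdf \<tau> \<eta> \<mu> X0 Q0 w t i)))^2)
               \<partial>(PiM (UNIV \<times> {..<N}) (\<lambda>(t, i). D i)))
           \<le> ennreal (45 * real \<tau>^2 * (\<sigma>^2 + \<omega>^2) / (real CARD('r) / real CARD('n))^2)"
proof -
  \<comment> \<open>Only the second-moment bound of (A3) enters.\<close>
  interpret powersgd N gF qrf svdf \<tau> \<eta> \<mu> X0 Q0 D
    by (rule powersgd.intro) (use assms(2,8,15-19) in auto)
  define \<delta> where "\<delta> = real CARD('r) / real CARD('n)"
  define G where "G = sqrt (\<sigma>\<^sup>2 + \<omega>\<^sup>2)"
  have \<delta>: "0 < \<delta>" "\<delta> \<le> 1"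
    using assms(2) by (auto simp: \<delta>_def)
  have G: "0 \<le> G" "G\<^sup>2 = \<sigma>\<^sup>2 + \<omega>\<^sup>2"
    by (simp_all add: G_def)
  have "(\<integral>\<^sup>+w. ennreal ((norm (mean_err w t))\<^sup>2) \<partial>samples)
      \<le> ennreal (45 * real \<tau>^2 * (\<sigma>^2 + \<omega>^2) / \<delta>^2)" for t
  proof -
    have "(\<integral>\<^sup>+w. ennreal ((norm (mean_err w t))\<^sup>2) \<partial>samples)
        \<le> ennreal ((restart_bound \<tau> (sqrt (1 - \<delta>)) G t)\<^sup>2)"
      using mean_err_moment_le[OF G(1)] assms(14) by (simp add: G(2) \<delta>_def)
    also have "\<dots> \<le> ennreal ((2 * real \<tau> * G / \<delta>)\<^sup>2)"
      using restart_bound_sqrt_le[OF assms(6) \<delta> G(1)] restart_bound_nonneg[of "sqrt (1 - \<delta>)" G] \<delta> G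
      by (intro ennreal_leI power_mono) auto
    also have "\<dots> \<le> ennreal (45 * real \<tau>^2 * (\<sigma>^2 + \<omega>^2) / \<delta>^2)"
      using \<delta> by (intro ennreal_leI) (simp add: power_divide power_mult_distrib G(2) divide_right_mono)
    finally show ?thesis .
  qed
  then show ?thesis
    by (simp add: mean_err_def \<delta>_def)
qed

end
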